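(* If the global optional splitting formula holds at $\tau$ with respect to $\mathbb{F}$, then for every $t\ge0$, $\mathcal{G}_t=\mathcal{N}\vee\sigma(\tau\nmid t)\vee\mathcal{F}_t$.
   Context: Let $(\Omega,\mathcal{A},\mathbb{Q})$ be a probability space with a right-continuous filtration $\mathbb{F}=(\mathcal{F}_t)_{t\ge0}$ such that $\mathcal{F}_0$ contains $\mathcal{N}^{\mathcal{F}_\infty}$, where for a $\sigma$-algebra $\mathcal{T}\subset\mathcal{A}$, $\mathcal{N}^{\mathcal{T}}$ denotes the $\sigma$-algebra generated by all subsets of $\mathcal{T}$-measurable $\mathbb{Q}$-null sets. Let $\tau$ be a random variable with values in $[0,\infty]$, let $\mathcal{N}=\mathcal{N}^{\sigma(\tau)\vee\mathcal{F}_\infty}$, and let $\mathbb{G}=(\mathcal{G}_t)_{t\ge0}$ with $\mathcal{G}_t=\mathcal{N}\vee\bigcap_{s>t}(\mathcal{F}_s\vee\sigma(\tau\wedge s))$. Identities between processes are understood up to indistinguishability outside an $\mathcal{N}$-measurable $\mathbb{Q}$-null set. For a function $Y''$ on $[0,\infty]\times(\mathbb{R}_+\times\Omega)$, $Y''(\tau)$ denotes the process $(t,\omega)\mapsto Y''(\tau(\omega),t,\omega)$. The global optional splitting formula at $\tau$ (with respect to $\mathbb{F}$) holds if for every $\mathbb{G}$-optional process $Y$ there exist $Y'\in\mathcal{O}(\mathbb{F})$ and a $\mathcal{B}[0,\infty]\otimes\mathcal{O}(\mathbb{F})$-measurable function $Y''$ on $[0,\infty]\times(\mathbb{R}_+\times\Omega)$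 with $Y=Y'\mathbf{1}_{[0,\tau)}+Y''(\tau)\mathbf{1}_{[\tau,\infty)}$. For $a,b\in[0,\infty]$, $a\nmid b=a$ if $a\le b$ and $a\nmid b=\infty$ if $a>b$. *)

theory Defs
  imports "HOL-Probability.Probability"
begin

(* Time set R_+ is represented as {0..} :: real set; processes are functions on real \<times> 'a
   (only their values on {0..} \<times> \<Omega> matter). *)

definition join_sa :: "'a set \<Rightarrow> 'a set set \<Rightarrow> 'a set set \<Rightarrow> 'a set set" where
  "join_sa \<Omega> A B = sigma_sets \<Omega> (A \<union> B)"

definition gen_rv :: "'a set \<Rightarrow> ('a \<Rightarrow> ennreal) \<Rightarrow> 'a set set" where
  "gen_rv \<Omega> X = {X -` B \<inter> \<Omega> | B. B \<in> sets (borel :: ennreal measure)}"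

definition null_sa :: "'a measure \<Rightarrow> 'a set set \<Rightarrow> 'a set set" where
  "null_sa Q T = sigma_sets (space Q)
     {B. \<exists>A\<in>T. A \<in> sets Q \<and> emeasure Q A = 0 \<and> B \<subseteq> A}"

definition Qnull :: "'a measure \<Rightarrow> 'a set \<Rightarrow> bool" where
  "Qnull Q Z \<longleftrightarrow> (\<exists>Z0\<in>sets Q. Z \<subseteq> Z0 \<and> emeasure Q Z0 = 0)"

definition is_filtration :: "'a measure \<Rightarrow> (real \<Rightarrow> 'a set set) \<Rightarrow> bool" where
  "is_filtration Q F \<longleftrightarrow>
     (\<forall>t\<ge>0. sigma_algebra (space Q) (F t) \<and> F t \<subseteq> sets Q) \<and>
     (\<forall>s t. 0 \<le> s \<longrightarrow> s \<le> t \<longrightarrow> F s \<subseteq> F t)"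

definition right_continuous_filtration :: "(real \<Rightarrow> 'a set set) \<Rightarrow> bool" where
  "right_continuous_filtration F \<longleftrightarrow> (\<forall>t\<ge>0. F t = (\<Inter>s\<in>{t<..}. F s))"

definition F_infty :: "'a set \<Rightarrow> (real \<Rightarrow> 'a set set) \<Rightarrow> 'a set set" where
  "F_infty \<Omega> F = sigma_sets \<Omega> (\<Union>t\<in>{0..}. F t)"

definition cadlag_adapted :: "'a set \<Rightarrow> (real \<Rightarrow> 'a set set) \<Rightarrow> (real \<times> 'a \<Rightarrow> real) \<Rightarrow> bool" where
  "cadlag_adapted \<Omega> F X \<longleftrightarrow>
     (\<forall>t\<ge>0. \<forall>B\<in>sets (borel :: real measure). {\<omega>\<in>\<Omega>. X (t, \<omega>) \<in> B} \<in> F t) \<and>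
     (\<forall>\<omega>\<in>\<Omega>. \<forall>t\<ge>0. ((\<lambda>s. X (s, \<omega>)) \<longlongrightarrow> X (t, \<omega>)) (at_right t) \<and>
        (0 < t \<longrightarrow> (\<exists>l. ((\<lambda>s. X (s, \<omega>)) \<longlongrightarrow> l) (at_left t))))"

definition optional_sa :: "'a set \<Rightarrow> (real \<Rightarrow> 'a set set) \<Rightarrow> (real \<times> 'a) set set" where
  "optional_sa \<Omega> F = sigma_sets ({0..} \<times> \<Omega>)
     {{p \<in> {0..} \<times> \<Omega>. X p \<in> B} | X B. cadlag_adapted \<Omega> F X \<and> B \<in> sets (borel :: real measure)}"

definition optional_process :: "'a set \<Rightarrow> (real \<Rightarrow> 'a set set) \<Rightarrow> (real \<times> 'a \<Rightarrow> real) \<Rightarrow> bool" where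
  "optional_process \<Omega> F Y \<longleftrightarrow>
     (\<forall>B\<in>sets (borel :: real measure). {p \<in> {0..} \<times> \<Omega>. Y p \<in> B} \<in> optional_sa \<Omega> F)"

definition borel_optional_measurable ::
    "'a set \<Rightarrow> (real \<Rightarrow> 'a set set) \<Rightarrow> (ennreal \<Rightarrow> real \<times> 'a \<Rightarrow> real) \<Rightarrow> bool" where
  "borel_optional_measurable \<Omega> F Y'' \<longleftrightarrow>
     (\<forall>B\<in>sets (borel :: real measure).
        {(u, p). p \<in> {0..} \<times> \<Omega> \<and> Y'' u p \<in> B} \<in>
        sigma_sets (UNIV \<times> ({0..} \<times> \<Omega>))
          {A \<times> C | A C. A \<in> sets (borel :: ennreal measure) \<and> C \<in> optional_sa \<Omega> F})"

definition N_sa :: "'a measure \<Rightarrow> (real \<Rightarrow> 'a set set) \<Rightarrow> ('a \<Rightarrow> ennreal) \<Rightarrow> 'a set set" where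
  "N_sa Q F \<tau> = null_sa Q (join_sa (space Q) (gen_rv (space Q) \<tau>) (F_infty (space Q) F))"

definition G_filt :: "'a measure \<Rightarrow> (real \<Rightarrow> 'a set set) \<Rightarrow> ('a \<Rightarrow> ennreal) \<Rightarrow> real \<Rightarrow> 'a set set" where
  "G_filt Q F \<tau> t = join_sa (space Q) (N_sa Q F \<tau>)
     (\<Inter>s\<in>{t<..}. join_sa (space Q) (F s) (gen_rv (space Q) (\<lambda>\<omega>. min (\<tau> \<omega>) (ennreal s))))"

definition nmid :: "ennreal \<Rightarrow> ennreal \<Rightarrow> ennreal" where
  "nmid a b = (if a \<le> b then a else \<infinity>)"

definition global_optional_splitting ::
    "'a measure \<Rightarrow> (real \<Rightarrow> 'a set set) \<Rightarrow> ('a \<Rightarrow> ennreal) \<Rightarrow> bool" where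
  "global_optional_splitting Q F \<tau> \<longleftrightarrow>
     (\<forall>Y. optional_process (space Q) (G_filt Q F \<tau>) Y \<longrightarrow>
        (\<exists>Y' Y''. optional_process (space Q) F Y' \<and>
           borel_optional_measurable (space Q) F Y'' \<and>
           (\<exists>Z\<in>N_sa Q F \<tau>. Qnull Q Z \<and>
              (\<forall>\<omega>\<in>space Q - Z. \<forall>t\<ge>0.
                 Y (t, \<omega>) = (if ennreal t < \<tau> \<omega> then Y' (t, \<omega>) else Y'' (\<tau> \<omega>) (t, \<omega>))))))"

end

theory Submission
  imports Defs
begin

(* Proof idea.  Fix t \<ge> 0 and write R = N \<or> \<sigma>(\<tau> \<nmid> t) \<or> F_t.

   R \<subseteq> G_t holds without any splitting hypothesis: N and F_t lie in G_t by
   construction, and \<tau> \<nmid> t = (\<tau> \<and> u) \<nmid> t for every u > t, so \<sigma>(\<tau> \<nmid> t) lies in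
   every F_u \<or> \<sigma>(\<tau> \<and> u), u > t.

   G_t \<subseteq> R: for A \<in> G_t the process Y = 1_{[t,\<infinity>) \<times> A} is cadlag and G-adapted,
   hence G-optional.  Splitting Y at \<tau> gives, outside an N-measurable null set Z,
     A = ({Y'_t = 1} \<inter> {\<tau> > t}) \<union> {\<tau> \<le> t, Y''(\<tau>)_t = 1},
   and both pieces are R-measurable because t-sections of F-optional sets are
   F_t-measurable and \<tau> restricted to {\<tau> \<le> t} is a function of \<tau> \<nmid> t.  Finally
   A \<inter> Z \<in> N, since an N-measurable Q-null set is covered by a null set of
   \<sigma>(\<tau>) \<or> F_\<infinity>. *)

lemma null_sa_into_space: "null_sa Q T \<subseteq> Pow (space Q)"
  unfolding null_sa_def
  by (intro subsetI PowI sigma_sets_into_sp[of _ "space Q"]) (auto dest: sets.sets_into_space)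

lemma null_sa_covered:
  assumes "B \<in> null_sa Q (sigma_sets (space Q) G)"
  shows "\<exists>Z0\<in>sigma_sets (space Q) G. Z0 \<in> null_sets Q \<and> (B \<subseteq> Z0 \<or> space Q - B \<subseteq> Z0)"
  using assms unfolding null_sa_def
proof (induction rule: sigma_sets.induct)
  case (Basic a)
  then show ?case by (auto simp: null_sets_def)
next
  case Empty
  show ?case using sigma_sets.Empty by auto
next
  case (Compl a)
  then show ?case by blast
next
  case (Union a)
  show ?case
  proof (cases "\<exists>j. \<exists>Z0\<in>sigma_sets (space Q) G. Z0 \<in> null_sets Q \<and> space Q - a j \<subseteq> Z0")
    case True
    then show ?thesis by blast
  next
    case False
    then obtain f where f: "\<And>i. f i \<in> sigma_sets (space Q) G" "\<And>i. f i \<in> null_sets Q"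
        "\<And>i. a i \<subseteq> f i"
      using Union.IH by metis
    have "(\<Union>i. f i) \<in> sigma_sets (space Q) G" using f(1) by (rule sigma_sets.Union)
    moreover have "(\<Union>i. f i) \<in> null_sets Q" using f(2) by (rule null_sets_UN)
    ultimately show ?thesis using f(3) by blast
  qed
qed

(* In a probability space, N^{\<sigma>(G)} contains every subset of its null sets:
   the complement alternative above is impossible. *)
lemma null_sa_subset_of_null:
  assumes Q: "prob_space Q" and Z: "Z \<in> null_sa Q (sigma_sets (space Q) G)" "Qnull Q Z"
    and B: "B \<subseteq> Z"
  shows "B \<in> null_sa Q (sigma_sets (space Q) G)"
proof -
  obtain Z0 where Z0: "Z0 \<in> sigma_sets (space Q) G" "Z0 \<in> null_sets Q"
      and cover: "Z \<subseteq> Z0 \<or> space Q - Z \<subseteq> Z0"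
    using null_sa_covered[OF Z(1)] by blast
  obtain Z1 where Z1: "Z1 \<in> null_sets Q" "Z \<subseteq> Z1"
    using Z(2) unfolding Qnull_def by auto
  have "\<not> space Q \<subseteq> Z0 \<union> Z1"
  proof
    assume "space Q \<subseteq> Z0 \<union> Z1"
    then have "space Q \<in> null_sets Q" using Z0(2) Z1(1) null_sets_subset by blast
    then show False using prob_space.emeasure_space_1[OF Q] by (auto simp: null_sets_def)
  qed
  then have "Z \<subseteq> Z0" using cover Z1(2) by blast
  then show ?thesis
    unfolding null_sa_def using Z0 B by (intro sigma_sets.Basic) (auto simp: null_sets_def)
qed

lemma nmid_le_iff: "nmid x (ennreal t) \<le> ennreal t \<longleftrightarrow> x \<le> ennreal t"
  unfolding nmid_def by (auto simp: top_unique)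

lemma nmid_measurable: "(\<lambda>x. nmid x (ennreal t)) \<in> borel_measurable borel"
  unfolding nmid_def by measurable

lemma nmid_min:
  assumes "0 \<le> t" "t < s"
  shows "nmid (min x (ennreal s)) (ennreal t) = nmid x (ennreal t)"
proof -
  have "ennreal t < ennreal s" using assms by (simp add: ennreal_lessI)
  then show ?thesis unfolding nmid_def by (auto simp: min_def dest: order.trans)
qed

lemma le_event_in_gen_rv_nmid:
  "{\<omega>\<in>\<Omega>. \<tau> \<omega> \<le> ennreal t} \<in> gen_rv \<Omega> (\<lambda>\<omega>. nmid (\<tau> \<omega>) (ennreal t))"
proof -
  have "{\<omega>\<in>\<Omega>. \<tau> \<omega> \<le> ennreal t} = (\<lambda>\<omega>. nmid (\<tau> \<omega>) (ennreal t)) -` {..ennreal t} \<inter> \<Omega>"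
    by (auto simp: nmid_le_iff)
  moreover have "{..ennreal t} \<in> sets (borel :: ennreal measure)" by measurable
  ultimately show ?thesis unfolding gen_rv_def by blast
qed

lemma optional_section:
  assumes sa: "sigma_algebra \<Omega> (F t)" and t: "0 \<le> t"
    and S: "S \<in> optional_sa \<Omega> F"
  shows "{\<omega>\<in>\<Omega>. (t, \<omega>) \<in> S} \<in> F t"
proof -
  interpret sigma_algebra \<Omega> "F t" by (fact sa)
  show ?thesis
    using S unfolding optional_sa_def
  proof (induction rule: sigma_sets.induct)
    case (Basic a)
    then obtain X B where "a = {p \<in> {0..} \<times> \<Omega>. X p \<in> B}" "cadlag_adapted \<Omega> F X"
      "B \<in> sets borel" by blast
    then show ?case using t unfolding cadlag_adapted_def by auto
  next
    case (Compl a)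
    have "{\<omega>\<in>\<Omega>. (t, \<omega>) \<in> {0..} \<times> \<Omega> - a} = \<Omega> - {\<omega>\<in>\<Omega>. (t, \<omega>) \<in> a}" using t by auto
    then show ?case using Compl.IH by auto
  next
    case (Union a)
    have "{\<omega>\<in>\<Omega>. (t, \<omega>) \<in> (\<Union>i. a i)} = (\<Union>i. {\<omega>\<in>\<Omega>. (t, \<omega>) \<in> a i})" by auto
    then show ?case using Union.IH by auto
  qed simp
qed

lemma stopped_section:
  fixes \<tau> :: "'a \<Rightarrow> ennreal"
  assumes sa: "sigma_algebra \<Omega> (F t)" and t: "0 \<le> t"
    and H: "sigma_algebra \<Omega> H" "gen_rv \<Omega> (\<lambda>\<omega>. nmid (\<tau> \<omega>) (ennreal t)) \<subseteq> H" "F t \<subseteq> H"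
    and W: "W \<in> sigma_sets (UNIV \<times> ({0..} \<times> \<Omega>))
          {A \<times> C | A C. A \<in> sets (borel :: ennreal measure) \<and> C \<in> optional_sa \<Omega> F}"
  shows "{\<omega>\<in>\<Omega>. \<tau> \<omega> \<le> ennreal t \<and> (\<tau> \<omega>, (t, \<omega>)) \<in> W} \<in> H"
proof -
  interpret sigma_algebra \<Omega> H by (fact H(1))
  have le: "{\<omega>\<in>\<Omega>. \<tau> \<omega> \<le> ennreal t} \<in> H" using le_event_in_gen_rv_nmid H(2) by blast
  show ?thesis
    using W
  proof (induction rule: sigma_sets.induct)
    case (Basic a)
    then obtain A C where a: "a = A \<times> C" and A: "A \<in> sets (borel :: ennreal measure)"
      and C: "C \<in> optional_sa \<Omega> F" by blast
    have "A \<inter> {..ennreal t} \<in> sets (borel :: ennreal measure)" using A by measurable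
    then have "(\<lambda>\<omega>. nmid (\<tau> \<omega>) (ennreal t)) -` (A \<inter> {..ennreal t}) \<inter> \<Omega> \<in> H"
      using H(2) unfolding gen_rv_def by blast
    moreover have "{\<omega>\<in>\<Omega>. (t, \<omega>) \<in> C} \<in> H" using optional_section[where F=F, OF sa t C] H(3) by blast
    moreover have "{\<omega>\<in>\<Omega>. \<tau> \<omega> \<le> ennreal t \<and> (\<tau> \<omega>, (t, \<omega>)) \<in> a} =
        ((\<lambda>\<omega>. nmid (\<tau> \<omega>) (ennreal t)) -` (A \<inter> {..ennreal t}) \<inter> \<Omega>) \<inter> {\<omega>\<in>\<Omega>. (t, \<omega>) \<in> C}"
      using a by (auto simp: nmid_def top_unique split: if_splits)
    ultimately show ?case by auto
  next
    case (Compl a)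
    have "{\<omega>\<in>\<Omega>. \<tau> \<omega> \<le> ennreal t \<and> (\<tau> \<omega>, (t, \<omega>)) \<in> UNIV \<times> ({0..} \<times> \<Omega>) - a}
        = {\<omega>\<in>\<Omega>. \<tau> \<omega> \<le> ennreal t} - {\<omega>\<in>\<Omega>. \<tau> \<omega> \<le> ennreal t \<and> (\<tau> \<omega>, (t, \<omega>)) \<in> a}"
      using t by auto
    then show ?case using le Compl.IH by auto
  next
    case (Union a)
    have "{\<omega>\<in>\<Omega>. \<tau> \<omega> \<le> ennreal t \<and> (\<tau> \<omega>, (t, \<omega>)) \<in> (\<Union>i. a i)} =
        (\<Union>i. {\<omega>\<in>\<Omega>. \<tau> \<omega> \<le> ennreal t \<and> (\<tau> \<omega>, (t, \<omega>)) \<in> a i})" by auto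
    then show ?case using Union.IH by auto
  qed simp
qed

lemma split_indicator_recovers_set:
  fixes \<tau> :: "'a \<Rightarrow> ennreal"
  assumes sa: "sigma_algebra \<Omega> (F t)" and t: "0 \<le> t"
    and H: "sigma_algebra \<Omega> H" "gen_rv \<Omega> (\<lambda>\<omega>. nmid (\<tau> \<omega>) (ennreal t)) \<subseteq> H" "F t \<subseteq> H"
    and Y': "optional_process \<Omega> F Y'" and Y'': "borel_optional_measurable \<Omega> F Y''"
    and A: "A \<subseteq> \<Omega>"
    and split: "\<And>\<omega>. \<omega> \<in> \<Omega> - Z \<Longrightarrow> (if \<omega> \<in> A then 1 else 0) =
       (if ennreal t < \<tau> \<omega> then Y' (t, \<omega>) else Y'' (\<tau> \<omega>) (t, \<omega>))"
  shows "\<exists>E\<in>H. A - Z = E - Z"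
proof -
  interpret sigma_algebra \<Omega> H by (fact H(1))
  have one: "{1} \<in> sets (borel :: real measure)" by simp
  define before where "before = {\<omega>\<in>\<Omega>. Y' (t, \<omega>) = 1}"
  define after where "after = {\<omega>\<in>\<Omega>. \<tau> \<omega> \<le> ennreal t \<and> Y'' (\<tau> \<omega>) (t, \<omega>) = 1}"
  have "{p \<in> {0..} \<times> \<Omega>. Y' p \<in> {1}} \<in> optional_sa \<Omega> F"
    using Y' one unfolding optional_process_def by blast
  from optional_section[where F=F, OF sa t this]
  have "before \<in> F t" unfolding before_def using t by simp
  then have "before \<in> H" using H(3) by blast
  moreover have "{(u, p). p \<in> {0..} \<times> \<Omega> \<and> Y'' u p \<in> {1}} \<in> sigma_sets (UNIV \<times> ({0..} \<times> \<Omega>))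
      {A \<times> C | A C. A \<in> sets (borel :: ennreal measure) \<and> C \<in> optional_sa \<Omega> F}"
    using Y'' one unfolding borel_optional_measurable_def by blast
  from stopped_section[where F=F, OF sa t H this]
  have "after \<in> H" unfolding after_def using t by (simp add: conj_left_commute)
  moreover have "{\<omega>\<in>\<Omega>. \<tau> \<omega> \<le> ennreal t} \<in> H" using le_event_in_gen_rv_nmid H(2) by blast
  ultimately have E: "(before - {\<omega>\<in>\<Omega>. \<tau> \<omega> \<le> ennreal t}) \<union> after \<in> H"
    by (intro Un Diff)
  have "\<omega> \<in> A \<longleftrightarrow> \<omega> \<in> (before - {\<omega>\<in>\<Omega>. \<tau> \<omega> \<le> ennreal t}) \<union> after"
    if "\<omega> \<in> \<Omega> - Z" for \<omega>
    using split[OF that] that t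
    by (cases "ennreal t < \<tau> \<omega>") (auto simp: before_def after_def not_less split: if_splits)
  moreover have "before \<union> after \<subseteq> \<Omega>" unfolding before_def after_def by blast
  ultimately have "A - Z = ((before - {\<omega>\<in>\<Omega>. \<tau> \<omega> \<le> ennreal t}) \<union> after) - Z"
    using A by blast
  with E show ?thesis by blast
qed

definition jump_indicator :: "real \<Rightarrow> 'a set \<Rightarrow> real \<times> 'a \<Rightarrow> real" where
  "jump_indicator t A p = (if t \<le> fst p \<and> snd p \<in> A then 1 else 0)"

lemma jump_indicator_optional:
  assumes sa: "\<And>s. sigma_algebra \<Omega> (G s)" and mono: "\<And>s u. s \<le> u \<Longrightarrow> G s \<subseteq> G u"
    and A: "A \<in> G t"
  shows "optional_process \<Omega> G (jump_indicator t A)"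
proof -
  have adapted: "{\<omega>\<in>\<Omega>. jump_indicator t A (s, \<omega>) \<in> B} \<in> G s" for s B
  proof -
    interpret sigma_algebra \<Omega> "G s" by (fact sa)
    show ?thesis
    proof (cases "t \<le> s")
      case True
      then have "A \<in> G s" using mono A by blast
      moreover have "{\<omega>\<in>\<Omega>. jump_indicator t A (s, \<omega>) \<in> B} =
          (if 1 \<in> B then A else {}) \<union> (if 0 \<in> B then \<Omega> - A else {})"
        using True sets_into_space[OF \<open>A \<in> G s\<close>] unfolding jump_indicator_def by auto
      ultimately show ?thesis by (auto intro!: Un compl_sets)
    next
      case False
      then have "{\<omega>\<in>\<Omega>. jump_indicator t A (s, \<omega>) \<in> B} = (if 0 \<in> B then \<Omega> else {})"
        unfolding jump_indicator_def by auto
      then show ?thesis by (simp add: top)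
    qed
  qed
  have right_cont: "((\<lambda>u. jump_indicator t A (u, \<omega>)) \<longlongrightarrow> jump_indicator t A (s, \<omega>)) (at_right s)"
    for s \<omega>
  proof (rule tendsto_eventually)
    have "\<exists>b>s. \<forall>u. s < u \<and> u < b \<longrightarrow> jump_indicator t A (u, \<omega>) = jump_indicator t A (s, \<omega>)"
      by (rule exI[of _ "if t \<le> s then s + 1 else t"]) (auto simp: jump_indicator_def)
    then show "\<forall>\<^sub>F u in at_right s. jump_indicator t A (u, \<omega>) = jump_indicator t A (s, \<omega>)"
      unfolding eventually_at_right_field by blast
  qed
  have left_lim: "\<exists>l. ((\<lambda>u. jump_indicator t A (u, \<omega>)) \<longlongrightarrow> l) (at_left s)" for s \<omega>
  proof -
    have "\<exists>b<s. \<forall>u. b < u \<and> u < s \<longrightarrow>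
        jump_indicator t A (u, \<omega>) = (if t < s \<and> \<omega> \<in> A then 1 else 0)"
      by (rule exI[of _ "if t < s then t else s - 1"]) (auto simp: jump_indicator_def)
    then have "\<forall>\<^sub>F u in at_left s.
        jump_indicator t A (u, \<omega>) = (if t < s \<and> \<omega> \<in> A then 1 else 0)"
      unfolding eventually_at_left_field by blast
    then show ?thesis by (blast intro: tendsto_eventually)
  qed
  have "cadlag_adapted \<Omega> G (jump_indicator t A)"
    unfolding cadlag_adapted_def using adapted right_cont left_lim by blast
  then show ?thesis
    unfolding optional_process_def optional_sa_def by (blast intro: sigma_sets.Basic)
qed

lemma filtration_into_space:
  assumes "is_filtration Q F" "0 \<le> u"
  shows "F u \<subseteq> Pow (space Q)"
  using assms sets.sets_into_space unfolding is_filtration_def by blast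

lemma join_F_into_space:
  assumes "is_filtration Q F" "0 \<le> u"
  shows "join_sa (space Q) (F u) (gen_rv (space Q) X) \<subseteq> Pow (space Q)"
  using filtration_into_space[OF assms] unfolding join_sa_def gen_rv_def
  by (intro subsetI PowI sigma_sets_into_sp[of _ "space Q"]) auto

lemma G_filt_sigma_algebra:
  assumes "is_filtration Q F"
  shows "sigma_algebra (space Q) (G_filt Q F \<tau> s)"
proof -
  define u where "u = \<bar>s\<bar> + 1"
  have "u \<in> {s<..}" "0 \<le> u" unfolding u_def by auto
  then have "(\<Inter>u\<in>{s<..}. join_sa (space Q) (F u) (gen_rv (space Q) (\<lambda>\<omega>. min (\<tau> \<omega>) (ennreal u))))
      \<subseteq> Pow (space Q)"
    using join_F_into_space[OF assms] by blast
  moreover have "N_sa Q F \<tau> \<subseteq> Pow (space Q)" unfolding N_sa_def by (rule null_sa_into_space)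
  ultimately show ?thesis
    unfolding G_filt_def join_sa_def by (intro sigma_algebra_sigma_sets) auto
qed

lemma G_filt_mono: "s \<le> u \<Longrightarrow> G_filt Q F \<tau> s \<subseteq> G_filt Q F \<tau> u"
  unfolding G_filt_def join_sa_def by (rule sigma_sets_mono') auto

lemma G_filt_generator_in:
  assumes "\<And>u. t < u \<Longrightarrow> B \<in> F u \<or> B \<in> gen_rv (space Q) (\<lambda>\<omega>. min (\<tau> \<omega>) (ennreal u))"
  shows "B \<in> G_filt Q F \<tau> t"
proof -
  have "B \<in> (\<Inter>u\<in>{t<..}. join_sa (space Q) (F u) (gen_rv (space Q) (\<lambda>\<omega>. min (\<tau> \<omega>) (ennreal u))))"
    using assms unfolding join_sa_def by (blast intro: sigma_sets.Basic)
  then show ?thesis unfolding G_filt_def join_sa_def by (blast intro: sigma_sets.Basic)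
qed

lemma nmid_generated_subset_G_filt:
  assumes F: "is_filtration Q F" and t: "0 \<le> t"
  shows "sigma_sets (space Q) (N_sa Q F \<tau> \<union> gen_rv (space Q) (\<lambda>\<omega>. nmid (\<tau> \<omega>) (ennreal t)) \<union> F t)
    \<subseteq> G_filt Q F \<tau> t"
proof (rule sigma_algebra.sigma_sets_subset[OF G_filt_sigma_algebra[OF F]], intro Un_least)
  show "N_sa Q F \<tau> \<subseteq> G_filt Q F \<tau> t"
    unfolding G_filt_def join_sa_def by (auto intro: sigma_sets.Basic)
  have "F t \<subseteq> F u" if "t < u" for u using F t that unfolding is_filtration_def by simp
  then show "F t \<subseteq> G_filt Q F \<tau> t" by (blast intro: G_filt_generator_in)
  show "gen_rv (space Q) (\<lambda>\<omega>. nmid (\<tau> \<omega>) (ennreal t)) \<subseteq> G_filt Q F \<tau> t"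
  proof
    fix x assume "x \<in> gen_rv (space Q) (\<lambda>\<omega>. nmid (\<tau> \<omega>) (ennreal t))"
    then obtain B where x: "x = (\<lambda>\<omega>. nmid (\<tau> \<omega>) (ennreal t)) -` B \<inter> space Q"
      and B: "(\<lambda>x. nmid x (ennreal t)) -` B \<in> sets borel"
      unfolding gen_rv_def using measurable_sets[OF nmid_measurable] by fastforce
    have "x \<in> gen_rv (space Q) (\<lambda>\<omega>. min (\<tau> \<omega>) (ennreal u))" if "t < u" for u
    proof -
      have "x = (\<lambda>\<omega>. min (\<tau> \<omega>) (ennreal u)) -` ((\<lambda>x. nmid x (ennreal t)) -` B) \<inter> space Q"
        unfolding x using nmid_min[OF t that] by auto
      then show ?thesis unfolding gen_rv_def using B by blast
    qed
    then show "x \<in> G_filt Q F \<tau> t" by (blast intro: G_filt_generator_in)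
  qed
qed

lemma G_filt_subset_nmid_generated:
  assumes Q: "prob_space Q" and F: "is_filtration Q F" and t: "0 \<le> t"
    and splitting: "global_optional_splitting Q F \<tau>"
  shows "G_filt Q F \<tau> t
    \<subseteq> sigma_sets (space Q) (N_sa Q F \<tau> \<union> gen_rv (space Q) (\<lambda>\<omega>. nmid (\<tau> \<omega>) (ennreal t)) \<union> F t)"
    (is "_ \<subseteq> ?R")
proof
  fix A assume A: "A \<in> G_filt Q F \<tau> t"
  have F_sa: "sigma_algebra (space Q) (F t)" using F t unfolding is_filtration_def by blast
  have "N_sa Q F \<tau> \<subseteq> Pow (space Q)" unfolding N_sa_def by (rule null_sa_into_space)
  moreover have "gen_rv (space Q) (\<lambda>\<omega>. nmid (\<tau> \<omega>) (ennreal t)) \<subseteq> Pow (space Q)"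
    unfolding gen_rv_def by blast
  ultimately have R_sa: "sigma_algebra (space Q) ?R"
    using filtration_into_space[OF F t] by (intro sigma_algebra_sigma_sets) auto
  interpret R: sigma_algebra "space Q" ?R by (fact R_sa)
  have N_R: "N_sa Q F \<tau> \<subseteq> ?R" and gen_R: "gen_rv (space Q) (\<lambda>\<omega>. nmid (\<tau> \<omega>) (ennreal t)) \<subseteq> ?R"
    and F_R: "F t \<subseteq> ?R"
    by (auto intro: sigma_sets.Basic)
  interpret G: sigma_algebra "space Q" "G_filt Q F \<tau> t" by (rule G_filt_sigma_algebra[OF F])
  have A_space: "A \<subseteq> space Q" using A by (rule G.sets_into_space)
  have "optional_process (space Q) (G_filt Q F \<tau>) (jump_indicator t A)"
    using A by (intro jump_indicator_optional G_filt_sigma_algebra[OF F] G_filt_mono)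
  then obtain Y' Y'' Z where Y': "optional_process (space Q) F Y'"
      and Y'': "borel_optional_measurable (space Q) F Y''"
      and Z: "Z \<in> N_sa Q F \<tau>" "Qnull Q Z"
      and split: "\<forall>\<omega>\<in>space Q - Z. \<forall>s\<ge>0. jump_indicator t A (s, \<omega>) =
          (if ennreal s < \<tau> \<omega> then Y' (s, \<omega>) else Y'' (\<tau> \<omega>) (s, \<omega>))"
    using splitting unfolding global_optional_splitting_def by blast
  have "(if \<omega> \<in> A then 1 else 0) =
      (if ennreal t < \<tau> \<omega> then Y' (t, \<omega>) else Y'' (\<tau> \<omega>) (t, \<omega>))"
    if "\<omega> \<in> space Q - Z" for \<omega>
    using split[rule_format, OF that t] by (simp add: jump_indicator_def)
  then obtain E where E: "E \<in> ?R" "A - Z = E - Z"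
    using split_indicator_recovers_set[where F=F, OF F_sa t R_sa gen_R F_R Y' Y'' A_space] by blast
  have "A \<inter> Z \<in> N_sa Q F \<tau>"
    using null_sa_subset_of_null[OF Q] Z unfolding N_sa_def join_sa_def by blast
  with N_R have "A \<inter> Z \<in> ?R" by blast
  moreover have "E - Z \<in> ?R" using E(1) Z(1) N_R by (intro R.Diff) auto
  ultimately have "(E - Z) \<union> (A \<inter> Z) \<in> ?R" by (rule R.Un[rotated])
  moreover have "A = (E - Z) \<union> (A \<inter> Z)" using E(2) by blast
  ultimately show "A \<in> ?R" by simp
qed

(* The main theorem: the two inclusions. *)
theorem mainTheorem2:
  fixes Q :: "'a measure" and F :: "real \<Rightarrow> 'a set set" and \<tau> :: "'a \<Rightarrow> ennreal"
  assumes "prob_space Q"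
    and "is_filtration Q F"
    and "right_continuous_filtration F"
    and "null_sa Q (F_infty (space Q) F) \<subseteq> F 0"
    and "\<tau> \<in> borel_measurable Q"
    and "global_optional_splitting Q F \<tau>"
  shows "\<forall>t\<ge>0. G_filt Q F \<tau> t =
           sigma_sets (space Q) (N_sa Q F \<tau> \<union> gen_rv (space Q) (\<lambda>\<omega>. nmid (\<tau> \<omega>) (ennreal t)) \<union> F t)"
  using G_filt_subset_nmid_generated[OF assms(1,2) _ assms(6)]
    nmid_generated_subset_G_filt[OF assms(2)]
  by blast

end
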